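(* Let $V$ be an $n$-dimensional left vector space over a division ring $R$ ($4\le n<\infty$), and let $n,k,l,m$ satisfy $l\ge 4$, $1<k<n-1$, $1<m<l-1$ and $\min\{m,l-m\}\le\min\{k,n-k\}$. Let $\mathcal J$ be the image of an isometric embedding of the Johnson graph $J(l,m)$ in the Grassmann graph $\Gamma_k(V)$, and let $\Gamma(\mathcal J)$ be the restriction (induced subgraph) of $\Gamma_k(V)$ to $\mathcal J$. Then every maximal clique of $\Gamma(\mathcal J)$ is contained in precisely one maximal clique of $\Gamma_k(V)$.
   Context: $\mathcal G_k(V)$ is the set of $k$-dimensional subspaces of $V$. The Grassmann graph $\Gamma_k(V)$ has vertex set $\mathcal G_k(V)$, two vertices being adjacent if their intersection is $(k-1)$-dimensional. The Johnson graph $J(l,m)$ has as vertices the $m$-element subsets of an $l$-element set, two being adjacent if they meet in $m-1$ elements. An isometric embedding is an injective map of vertex sets preserving graph distance. *)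

theory Defs
  imports Main
begin

text \<open>An n-dimensional left vector space over a division ring R is modelled (up to
  isomorphism) as the coordinate space R^n: functions nat => R vanishing outside {..<n},
  with left scalar multiplication c * v i.\<close>

definition coord_space :: "nat \<Rightarrow> (nat \<Rightarrow> 'a::division_ring) set" where
  "coord_space n = {v. \<forall>i\<ge>n. v i = 0}"

definition lspan :: "(nat \<Rightarrow> 'a::division_ring) set \<Rightarrow> (nat \<Rightarrow> 'a) set" where
  "lspan S = {(\<lambda>j. \<Sum>v\<in>F. c v * v j) | F c. finite F \<and> F \<subseteq> S}"

definition lindep_free :: "(nat \<Rightarrow> 'a::division_ring) set \<Rightarrow> bool" where
  "lindep_free S \<longleftrightarrow> (\<forall>F c. finite F \<and> F \<subseteq> S \<and> (\<forall>j. (\<Sum>v\<in>F. c v * v j) = 0)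
      \<longrightarrow> (\<forall>v\<in>F. c v = 0))"

definition has_dim :: "(nat \<Rightarrow> 'a::division_ring) set \<Rightarrow> nat \<Rightarrow> bool" where
  "has_dim U d \<longleftrightarrow> (\<exists>B. finite B \<and> card B = d \<and> lindep_free B \<and> lspan B = U)"

definition grass :: "nat \<Rightarrow> nat \<Rightarrow> (nat \<Rightarrow> 'a::division_ring) set set" where
  "grass n k = {U. U \<subseteq> coord_space n \<and> has_dim U k}"

definition grass_adj :: "nat \<Rightarrow> (nat \<Rightarrow> 'a::division_ring) set \<Rightarrow> (nat \<Rightarrow> 'a) set \<Rightarrow> bool" where
  "grass_adj k X Y \<longleftrightarrow> has_dim (X \<inter> Y) (k - 1)"

definition johnson :: "nat \<Rightarrow> nat \<Rightarrow> nat set set" where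
  "johnson l m = {A. A \<subseteq> {..<l} \<and> card A = m}"

definition johnson_adj :: "nat \<Rightarrow> nat set \<Rightarrow> nat set \<Rightarrow> bool" where
  "johnson_adj m A B \<longleftrightarrow> card (A \<inter> B) = m - 1"

text \<open>Graphs given by a vertex set and an adjacency relation.
  Graph distance: least length of a walk (all graphs used here are connected).\<close>
definition gdist :: "'v set \<Rightarrow> ('v \<Rightarrow> 'v \<Rightarrow> bool) \<Rightarrow> 'v \<Rightarrow> 'v \<Rightarrow> nat" where
  "gdist Vs adj x y = (LEAST d. \<exists>p::nat \<Rightarrow> 'v. p 0 = x \<and> p d = y \<and>
       (\<forall>i\<le>d. p i \<in> Vs) \<and> (\<forall>i<d. adj (p i) (p (Suc i))))"

definition isometric_embedding ::
  "'v set \<Rightarrow> ('v \<Rightarrow> 'v \<Rightarrow> bool) \<Rightarrow> 'w set \<Rightarrow> ('w \<Rightarrow> 'w \<Rightarrow> bool) \<Rightarrow> ('v \<Rightarrow> 'w) \<Rightarrow> bool" where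
  "isometric_embedding V1 adj1 V2 adj2 f \<longleftrightarrow>
     inj_on f V1 \<and> f ` V1 \<subseteq> V2 \<and>
     (\<forall>x\<in>V1. \<forall>y\<in>V1. gdist V2 adj2 (f x) (f y) = gdist V1 adj1 x y)"

definition clique :: "'v set \<Rightarrow> ('v \<Rightarrow> 'v \<Rightarrow> bool) \<Rightarrow> 'v set \<Rightarrow> bool" where
  "clique Vs adj C \<longleftrightarrow> C \<subseteq> Vs \<and> (\<forall>x\<in>C. \<forall>y\<in>C. x \<noteq> y \<longrightarrow> adj x y)"

definition maximal_clique :: "'v set \<Rightarrow> ('v \<Rightarrow> 'v \<Rightarrow> bool) \<Rightarrow> 'v set \<Rightarrow> bool" where
  "maximal_clique Vs adj C \<longleftrightarrow> clique Vs adj C \<and> (\<forall>D. clique Vs adj D \<and> C \<subseteq> D \<longrightarrow> D = C)"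

end

(*
  An isometric embedding of connected loopless graphs preserves and reflects adjacency, so the
  maximal clique C of \<Gamma>(J) is the image of a maximal clique of J(l,m). Such a clique contains
  three distinct vertices X1, X2, X3, and because 1 < m < l - 1 some vertex of J(l,m) is adjacent
  to X1 and X2 but not to X3. So C contains distinct P, Q, R, and \<Gamma>_k(V) contains Z adjacent to
  P and Q but not to R.

  Three pairwise adjacent k-subspaces P, Q, R satisfy P \<inter> Q \<subseteq> R or R \<subseteq> P + Q, and
  Z rules out that both hold. If R contains S = P \<inter> Q, every k-subspace equal or adjacent to
  each of P, Q, R contains S; if R lies in T = P + Q, every such subspace lies in T. Hence every
  clique containing C lies in the star of S, resp. the top of T, which is itself a clique and
  therefore the unique maximal clique containing C.
*)

theory Submission
  imports Defs
begin

section \<open>Linear algebra over a division ring\<close>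

definition lin_comb :: "((nat \<Rightarrow> 'a::division_ring) \<Rightarrow> 'a) \<Rightarrow> (nat \<Rightarrow> 'a) set \<Rightarrow> nat \<Rightarrow> 'a" where
  "lin_comb c F = (\<lambda>j. \<Sum>v\<in>F. c v * v j)"

definition lsubspace :: "(nat \<Rightarrow> 'a::division_ring) set \<Rightarrow> bool" where
  "lsubspace U \<longleftrightarrow> (\<lambda>j. 0) \<in> U \<and> (\<forall>u\<in>U. \<forall>w\<in>U. (\<lambda>j. u j + w j) \<in> U)
     \<and> (\<forall>c. \<forall>u\<in>U. (\<lambda>j. c * u j) \<in> U)"

lemma lspan_conv_lin_comb: "lspan S = {lin_comb c F | F c. finite F \<and> F \<subseteq> S}"
  unfolding lspan_def lin_comb_def by simp

lemma lin_comb_in_lspan: "finite F \<Longrightarrow> F \<subseteq> S \<Longrightarrow> lin_comb c F \<in> lspan S"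
  unfolding lspan_conv_lin_comb by blast

lemma lspanE:
  assumes "x \<in> lspan S"
  obtains F c where "finite F" "F \<subseteq> S" "lin_comb c F = x"
  using assms unfolding lspan_conv_lin_comb by blast

lemma lin_comb_insert:
  "finite F \<Longrightarrow> v \<notin> F \<Longrightarrow> lin_comb c (insert v F) = (\<lambda>j. c v * v j + lin_comb c F j)"
  by (simp add: lin_comb_def)

lemma lin_comb_scale: "(\<lambda>j. a * lin_comb c F j) = lin_comb (\<lambda>v. a * c v) F"
  by (simp add: lin_comb_def sum_distrib_left mult.assoc)

lemma lin_comb_add:
  assumes "finite F1" "finite F2"
  shows "(\<lambda>j. lin_comb c1 F1 j + lin_comb c2 F2 j)
    = lin_comb (\<lambda>v. (if v \<in> F1 then c1 v else 0) + (if v \<in> F2 then c2 v else 0)) (F1 \<union> F2)"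
proof
  fix j
  have "lin_comb c1 F1 j = (\<Sum>v\<in>F1\<union>F2. if v \<in> F1 then c1 v * v j else 0)"
    using assms sum.inter_restrict[of "F1 \<union> F2" "\<lambda>v. c1 v * v j" F1]
    by (simp add: lin_comb_def Int_absorb1)
  moreover have "lin_comb c2 F2 j = (\<Sum>v\<in>F1\<union>F2. if v \<in> F2 then c2 v * v j else 0)"
    using assms sum.inter_restrict[of "F1 \<union> F2" "\<lambda>v. c2 v * v j" F2]
    by (simp add: lin_comb_def Int_absorb1)
  moreover have "lin_comb (\<lambda>v. (if v \<in> F1 then c1 v else 0) + (if v \<in> F2 then c2 v else 0)) (F1 \<union> F2) j
      = (\<Sum>v\<in>F1\<union>F2. if v \<in> F1 then c1 v * v j else 0) + (\<Sum>v\<in>F1\<union>F2. if v \<in> F2 then c2 v * v j else 0)"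
    unfolding lin_comb_def sum.distrib[symmetric] by (rule sum.cong) (auto simp: distrib_right)
  ultimately show "lin_comb c1 F1 j + lin_comb c2 F2 j
      = lin_comb (\<lambda>v. (if v \<in> F1 then c1 v else 0) + (if v \<in> F2 then c2 v else 0)) (F1 \<union> F2) j"
    by simp
qed

lemma lin_comb_in_lsubspace:
  assumes "lsubspace U" "finite F" "F \<subseteq> U"
  shows "lin_comb c F \<in> U"
  using assms(2,3)
proof (induction F rule: finite_induct)
  case empty
  then show ?case using assms(1) by (simp add: lsubspace_def lin_comb_def)
next
  case (insert x F)
  then have "lin_comb c F \<in> U" "(\<lambda>j. c x * x j) \<in> U" using assms(1) by (auto simp: lsubspace_def)
  then show ?case using insert assms(1) by (simp add: lin_comb_insert lsubspace_def)
qed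

lemma lsubspace_lspan: "lsubspace (lspan S)"
  unfolding lsubspace_def
proof (intro conjI ballI allI)
  show "(\<lambda>j. 0) \<in> lspan S"
    using lin_comb_in_lspan[of "{}" S] by (simp add: lin_comb_def)
next
  fix u w assume "u \<in> lspan S" "w \<in> lspan S"
  then obtain F1 c1 F2 c2 where "finite F1" "F1 \<subseteq> S" "u = lin_comb c1 F1"
      "finite F2" "F2 \<subseteq> S" "w = lin_comb c2 F2"
    by (metis lspanE)
  then show "(\<lambda>j. u j + w j) \<in> lspan S" by (simp add: lin_comb_add lin_comb_in_lspan)
next
  fix a u assume "u \<in> lspan S"
  then obtain F c where "finite F" "F \<subseteq> S" "u = lin_comb c F" by (metis lspanE)
  then show "(\<lambda>j. a * u j) \<in> lspan S" by (simp add: lin_comb_scale lin_comb_in_lspan)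
qed

lemma lspan_minimal: "lsubspace U \<Longrightarrow> S \<subseteq> U \<Longrightarrow> lspan S \<subseteq> U"
  by (metis lin_comb_in_lsubspace lspanE order_trans subsetI)

lemma lspan_superset: "S \<subseteq> lspan S"
proof
  fix v assume "v \<in> S"
  then have "lin_comb (\<lambda>_. 1) {v} \<in> lspan S" by (intro lin_comb_in_lspan) auto
  then show "v \<in> lspan S" by (simp add: lin_comb_def)
qed

lemma lspan_mono: "S \<subseteq> T \<Longrightarrow> lspan S \<subseteq> lspan T"
  by (metis lspanE lin_comb_in_lspan order_trans subsetI)

lemma lspan_subset_lspan_iff: "lspan S \<subseteq> lspan T \<longleftrightarrow> S \<subseteq> lspan T"
  using lspan_superset lspan_minimal[OF lsubspace_lspan] by blast

lemma lsubspace_Int: "lsubspace U \<Longrightarrow> lsubspace W \<Longrightarrow> lsubspace (U \<inter> W)"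
  unfolding lsubspace_def by blast

lemma lindep_free_subset: "lindep_free A \<Longrightarrow> B \<subseteq> A \<Longrightarrow> lindep_free B"
  unfolding lindep_free_def by blast

lemma lindep_free_lin_comb_eq_0:
  "lindep_free A \<Longrightarrow> finite F \<Longrightarrow> F \<subseteq> A \<Longrightarrow> lin_comb c F = (\<lambda>j. 0) \<Longrightarrow> v \<in> F \<Longrightarrow> c v = 0"
  unfolding lindep_free_def lin_comb_def by metis

lemma lindep_free_not_in_lspan:
  assumes "lindep_free A" "a \<in> A"
  shows "a \<notin> lspan (A - {a})"
proof
  assume "a \<in> lspan (A - {a})"
  then obtain F c where F: "finite F" "F \<subseteq> A - {a}" "lin_comb c F = a" by (rule lspanE)
  define c' where "c' = c(a := -1)"
  have "a \<notin> F" using F(2) by blast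
  then have "lin_comb c' F = lin_comb c F"
    unfolding lin_comb_def c'_def by (intro ext sum.cong) auto
  then have "lin_comb c' (insert a F) = (\<lambda>j. 0)"
    using F \<open>a \<notin> F\<close> by (simp add: lin_comb_insert c'_def)
  then have "c' a = 0"
    using F assms by (intro lindep_free_lin_comb_eq_0[OF assms(1), of "insert a F"]) auto
  then show False by (simp add: c'_def)
qed

lemma lindep_free_insert:
  assumes "lindep_free S" "b \<notin> lspan S"
  shows "lindep_free (insert b S)"
  unfolding lindep_free_def
proof (intro allI impI)
  fix F c assume H: "finite F \<and> F \<subseteq> insert b S \<and> (\<forall>j. (\<Sum>v\<in>F. c v * v j) = 0)"
  define F0 where "F0 = F - {b}"
  have F0: "finite F0" "F0 \<subseteq> S" using H by (auto simp: F0_def)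
  have eq: "c b * b j + lin_comb c F0 j = 0" if "b \<in> F" for j
    using H that sum.remove[of F b "\<lambda>v. c v * v j"] by (simp add: lin_comb_def F0_def)
  have cb: "c b = 0" if "b \<in> F"
  proof (rule ccontr)
    assume "c b \<noteq> 0"
    have "b = (\<lambda>j. (- inverse (c b)) * lin_comb c F0 j)"
    proof
      fix j
      have "c b * b j = - lin_comb c F0 j" using eq[OF that, of j] by (simp add: eq_neg_iff_add_eq_0)
      then have "inverse (c b) * (c b * b j) = inverse (c b) * (- lin_comb c F0 j)" by simp
      then show "b j = (- inverse (c b)) * lin_comb c F0 j"
        using \<open>c b \<noteq> 0\<close> by (simp add: mult.assoc[symmetric])
    qed
    also have "\<dots> \<in> lspan S" unfolding lin_comb_scale using F0 by (rule lin_comb_in_lspan)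
    finally show False using assms(2) by simp
  qed
  have "lin_comb c F0 = (\<lambda>j. 0)"
  proof (cases "b \<in> F")
    case True
    then show ?thesis using eq cb by auto
  next
    case False
    then show ?thesis using H by (auto simp: lin_comb_def F0_def)
  qed
  then have "\<forall>v\<in>F0. c v = 0" using lindep_free_lin_comb_eq_0[OF assms(1) F0] by blast
  then show "\<forall>v\<in>F. c v = 0" using cb F0_def by blast
qed

text \<open>Steinitz exchange: trade the elements of A outside B for elements of B one at a time.\<close>

lemma lindep_free_card_le:
  assumes "finite B"
  shows "finite A \<Longrightarrow> lindep_free A \<Longrightarrow> A \<subseteq> lspan B \<Longrightarrow> card A \<le> card B"
proof (induction "card (A - B)" arbitrary: A rule: less_induct)
  case less
  show ?case
  proof (cases "A \<subseteq> B")
    case True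
    then show ?thesis using assms card_mono by blast
  next
    case False
    then obtain a where a: "a \<in> A" "a \<notin> B" by blast
    have "\<not> B \<subseteq> lspan (A - {a})"
      using less.prems(3) a lindep_free_not_in_lspan[OF less.prems(2) a(1)]
      by (metis lspan_subset_lspan_iff subset_iff)
    then obtain b where b: "b \<in> B" "b \<notin> lspan (A - {a})" by blast
    have bA: "b \<notin> A - {a}" using b(2) lspan_superset[of "A - {a}"] by blast
    define A' where "A' = insert b (A - {a})"
    have ind: "lindep_free A'"
      unfolding A'_def by (rule lindep_free_insert[OF lindep_free_subset[OF less.prems(2)] b(2)]) auto
    have fin: "finite A'" and sub: "A' \<subseteq> lspan B"
      using less.prems(1,3) b(1) lspan_superset[of B] unfolding A'_def by auto
    have "card A' = Suc (card (A - {a}))" unfolding A'_def using bA less.prems(1) by simp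
    also have "\<dots> = card A" by (rule card_Suc_Diff1[OF less.prems(1) a(1)])
    finally have card_eq: "card A' = card A" .
    have "A' - B = (A - B) - {a}" unfolding A'_def using b(1) by blast
    moreover have "card ((A - B) - {a}) < card (A - B)"
      using a less.prems(1) by (intro card_Diff1_less) auto
    ultimately have "card A' \<le> card B" using less.hyps[OF _ fin ind sub] by simp
    then show ?thesis using card_eq by simp
  qed
qed

lemma lindep_free_extend_basis:
  assumes "lsubspace W" "W \<subseteq> lspan B0" "finite B0"
  shows "finite C \<Longrightarrow> C \<subseteq> W \<Longrightarrow> lindep_free C \<Longrightarrow>
    \<exists>D. C \<subseteq> D \<and> D \<subseteq> W \<and> finite D \<and> lindep_free D \<and> lspan D = W"
proof (induction "card B0 - card C" arbitrary: C rule: less_induct)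
  case less
  show ?case
  proof (cases "lspan C = W")
    case True
    then show ?thesis using less.prems by blast
  next
    case False
    then obtain v where v: "v \<in> W" "v \<notin> lspan C"
      using lspan_minimal[OF assms(1) less.prems(2)] by blast
    have "v \<notin> C" using v lspan_superset[of C] by blast
    have ind: "lindep_free (insert v C)" by (rule lindep_free_insert[OF less.prems(3) v(2)])
    have sub: "insert v C \<subseteq> W" and fin: "finite (insert v C)" using v less.prems by auto
    have "card (insert v C) \<le> card B0"
      using lindep_free_card_le[OF assms(3) fin ind] sub assms(2) by blast
    then have "card B0 - card (insert v C) < card B0 - card C" using \<open>v \<notin> C\<close> less.prems(1) by simp
    then obtain D where "insert v C \<subseteq> D" "D \<subseteq> W" "finite D" "lindep_free D" "lspan D = W"
      using less.hyps[OF _ fin sub ind] by blast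
    then show ?thesis by blast
  qed
qed

lemma has_dim_lsubspace: "has_dim U d \<Longrightarrow> lsubspace U"
  unfolding has_dim_def using lsubspace_lspan by blast

lemma has_dim_lspan: "finite B \<Longrightarrow> lindep_free B \<Longrightarrow> has_dim (lspan B) (card B)"
  unfolding has_dim_def by blast

lemma has_dim_unique: "has_dim U d \<Longrightarrow> has_dim U e \<Longrightarrow> d = e"
  unfolding has_dim_def by (metis le_antisym lindep_free_card_le lspan_superset)

lemma has_dim_lsubspace_le:
  assumes "has_dim U d" "lsubspace W" "W \<subseteq> U"
  shows "\<exists>e\<le>d. has_dim W e \<and> (e = d \<longrightarrow> W = U)"
proof -
  obtain B where B: "finite B" "card B = d" "lindep_free B" "lspan B = U"
    using assms(1) unfolding has_dim_def by blast
  obtain D where D: "D \<subseteq> W" "finite D" "lindep_free D" "lspan D = W"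
    using lindep_free_extend_basis[OF assms(2) _ B(1), of "{}"] assms(3) B(4)
    unfolding lindep_free_def by auto
  have "card D \<le> d" using lindep_free_card_le[OF B(1) D(2,3)] D(1) assms(3) B by blast
  moreover have "W = U" if "card D = d"
  proof -
    obtain D' where D': "D \<subseteq> D'" "D' \<subseteq> U" "finite D'" "lindep_free D'" "lspan D' = U"
      using lindep_free_extend_basis[OF has_dim_lsubspace[OF assms(1)] _ B(1) D(2)] D(1,3) assms(3) B(4)
      by blast
    have "card D' \<le> d" using lindep_free_card_le[OF B(1) D'(3,4)] D'(2) B by blast
    then have "D = D'" using card_subset_eq[OF D'(3,1)] that card_mono[OF D'(3,1)] by simp
    then show "W = U" using D(4) D'(5) by simp
  qed
  ultimately show ?thesis using D has_dim_lspan by blast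
qed

lemma has_dim_subset:
  "has_dim U d \<Longrightarrow> has_dim W e \<Longrightarrow> W \<subseteq> U \<Longrightarrow> e \<le> d \<and> (e = d \<longrightarrow> W = U)"
  using has_dim_lsubspace_le has_dim_lsubspace has_dim_unique by metis

lemma has_dim_psubset: "has_dim U d \<Longrightarrow> has_dim W e \<Longrightarrow> W \<subset> U \<Longrightarrow> e < d"
  using has_dim_subset by fastforce

lemma lindep_free_extend_to_has_dim:
  assumes "has_dim U d" "finite C" "C \<subseteq> U" "lindep_free C"
  obtains A where "A \<inter> C = {}" "finite A" "lindep_free (C \<union> A)" "lspan (C \<union> A) = U"
    "card C + card A = d"
proof -
  obtain B where B: "finite B" "lspan B = U" using assms(1) unfolding has_dim_def by blast
  obtain D where D: "C \<subseteq> D" "finite D" "lindep_free D" "lspan D = U"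
    using lindep_free_extend_basis[OF has_dim_lsubspace[OF assms(1)] _ B(1) assms(2,3,4)] B(2) by blast
  have "card D = d" using has_dim_unique[OF has_dim_lspan[OF D(2,3)]] D(4) assms(1) by simp
  moreover have "C \<union> (D - C) = D" using D(1) by blast
  moreover have "card C + card (D - C) = card D"
    using D(1,2) by (metis card_Diff_subset card_mono finite_subset le_add_diff_inverse)
  ultimately show ?thesis using that[of "D - C"] D by auto
qed

lemma lindep_free_Un_lspan_Int:
  assumes "lindep_free (P \<union> Q)" "P \<inter> Q = {}" "x \<in> lspan P" "x \<in> lspan Q"
  shows "x = (\<lambda>j. 0)"
proof -
  obtain F1 c1 where F1: "finite F1" "F1 \<subseteq> P" "lin_comb c1 F1 = x" using assms(3) by (rule lspanE)
  obtain F2 c2 where F2: "finite F2" "F2 \<subseteq> Q" "lin_comb c2 F2 = x" using assms(4) by (rule lspanE)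
  have dis: "F1 \<inter> F2 = {}" using F1 F2 assms(2) by blast
  define c where "c v = (if v \<in> F1 then c1 v else - c2 v)" for v
  have "lin_comb c (F1 \<union> F2) = (\<lambda>j. 0)"
  proof
    fix j
    have "lin_comb c (F1 \<union> F2) j = (\<Sum>v\<in>F1. c v * v j) + (\<Sum>v\<in>F2. c v * v j)"
      unfolding lin_comb_def using F1(1) F2(1) dis by (simp add: sum.union_disjoint)
    also have "(\<Sum>v\<in>F1. c v * v j) = x j"
      using F1(3) unfolding c_def lin_comb_def by (auto intro: sum.cong)
    also have "(\<Sum>v\<in>F2. c v * v j) = (\<Sum>v\<in>F2. - (c2 v * v j))"
      using dis unfolding c_def by (intro sum.cong) auto
    also have "\<dots> = - x j" using F2(3) unfolding lin_comb_def by (auto simp: sum_negf)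
    finally show "lin_comb c (F1 \<union> F2) j = 0" by simp
  qed
  then have "\<And>v. v \<in> F1 \<Longrightarrow> c v = 0"
    using lindep_free_lin_comb_eq_0[OF assms(1), of "F1 \<union> F2" c] F1 F2 by auto
  then have "lin_comb c1 F1 = (\<lambda>j. 0)" unfolding lin_comb_def c_def by (auto intro: sum.neutral)
  then show ?thesis using F1(3) by simp
qed

lemma lindep_free_Un:
  assumes "lindep_free P" "lindep_free Q" "P \<inter> Q = {}"
    and "\<And>x. x \<in> lspan P \<Longrightarrow> x \<in> lspan Q \<Longrightarrow> x = (\<lambda>j. 0)"
  shows "lindep_free (P \<union> Q)"
  unfolding lindep_free_def
proof (intro allI impI)
  fix F c assume H: "finite F \<and> F \<subseteq> P \<union> Q \<and> (\<forall>j. (\<Sum>v\<in>F. c v * v j) = 0)"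
  define F1 F2 where "F1 = F \<inter> P" and "F2 = F \<inter> Q"
  have F: "F = F1 \<union> F2" "F1 \<inter> F2 = {}" "finite F1" "finite F2" "F1 \<subseteq> P" "F2 \<subseteq> Q"
    using H assms(3) unfolding F1_def F2_def by auto
  have sum0: "lin_comb c F1 j + lin_comb c F2 j = 0" for j
    using H sum.union_disjoint[OF F(3,4,2)] unfolding lin_comb_def F(1) by metis
  then have "lin_comb c F1 = lin_comb (\<lambda>v. - c v) F2"
    by (intro ext) (simp add: lin_comb_def sum_negf eq_neg_iff_add_eq_0)
  then have z1: "lin_comb c F1 = (\<lambda>j. 0)" using assms(4) lin_comb_in_lspan F by metis
  then have "lin_comb c F2 = (\<lambda>j. 0)" using sum0 by (metis add_0)
  then show "\<forall>v\<in>F. c v = 0"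
    using z1 lindep_free_lin_comb_eq_0[OF assms(1)] lindep_free_lin_comb_eq_0[OF assms(2)] F by blast
qed

lemma has_dim_common_basis:
  assumes "has_dim X a" "has_dim W b"
  obtains C A B where "finite C" "finite A" "finite B" "C \<inter> A = {}" "C \<inter> B = {}" "A \<inter> B = {}"
    "lindep_free (C \<union> A \<union> B)" "lspan C = X \<inter> W" "lspan (C \<union> A) = X" "lspan (C \<union> B) = W"
    "card C + card A = a" "card C + card B = b"
proof -
  have "lsubspace (X \<inter> W)" using assms has_dim_lsubspace lsubspace_Int by blast
  then obtain e where "has_dim (X \<inter> W) e" using has_dim_lsubspace_le[OF assms(1)] by blast
  then obtain C where C: "finite C" "lindep_free C" "lspan C = X \<inter> W" unfolding has_dim_def by blast
  have CXW: "C \<subseteq> X" "C \<subseteq> W" using C(3) lspan_superset[of C] by blast+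
  obtain A where A: "A \<inter> C = {}" "finite A" "lindep_free (C \<union> A)" "lspan (C \<union> A) = X"
      "card C + card A = a"
    using lindep_free_extend_to_has_dim[OF assms(1) C(1) CXW(1) C(2)] by blast
  obtain B where B: "B \<inter> C = {}" "finite B" "lindep_free (C \<union> B)" "lspan (C \<union> B) = W"
      "card C + card B = b"
    using lindep_free_extend_to_has_dim[OF assms(2) C(1) CXW(2) C(2)] by blast
  have AB: "A \<inter> B = {}"
  proof (rule ccontr)
    assume "A \<inter> B \<noteq> {}"
    then obtain v where v: "v \<in> A" "v \<in> B" by blast
    then have "v \<in> lspan C"
      using A(4) B(4) C(3) lspan_superset[of "C \<union> A"] lspan_superset[of "C \<union> B"] by blast
    moreover have "lspan C \<subseteq> lspan ((C \<union> A) - {v})" using v A(1) by (intro lspan_mono) blast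
    ultimately show False using lindep_free_not_in_lspan[OF A(3), of v] v by blast
  qed
  have "lindep_free (C \<union> A \<union> B)"
  proof (rule lindep_free_Un[OF A(3) lindep_free_subset[OF B(3)]])
    fix x assume "x \<in> lspan (C \<union> A)" "x \<in> lspan B"
    moreover have "lspan B \<subseteq> W" using B(4) lspan_mono[of B "C \<union> B"] by blast
    ultimately have "x \<in> lspan C" using A(4) C(3) by blast
    then show "x = (\<lambda>j. 0)"
      using lindep_free_Un_lspan_Int[OF B(3)] \<open>x \<in> lspan B\<close> B(1) by blast
  qed (use AB B(1) in auto)
  with C A B AB show ?thesis by (intro that) auto
qed

lemma has_dim_lspan_Un_Int:
  assumes "has_dim X a" "has_dim W b"
  obtains s i where "has_dim (lspan (X \<union> W)) s" "has_dim (X \<inter> W) i" "s + i = a + b"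
proof -
  obtain C A B where T: "finite C" "finite A" "finite B" "C \<inter> A = {}" "C \<inter> B = {}" "A \<inter> B = {}"
    "lindep_free (C \<union> A \<union> B)" "lspan C = X \<inter> W" "lspan (C \<union> A) = X" "lspan (C \<union> B) = W"
    "card C + card A = a" "card C + card B = b"
    using has_dim_common_basis[OF assms] by blast
  have "X \<union> W \<subseteq> lspan (C \<union> A \<union> B)"
    using T(9,10) lspan_mono[of "C \<union> A" "C \<union> A \<union> B"] lspan_mono[of "C \<union> B" "C \<union> A \<union> B"] by blast
  moreover have "C \<union> A \<union> B \<subseteq> lspan (X \<union> W)"
    using T(9,10) lspan_superset[of "C \<union> A"] lspan_superset[of "C \<union> B"] lspan_superset[of "X \<union> W"]
    by blast
  ultimately have "lspan (X \<union> W) = lspan (C \<union> A \<union> B)"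
    by (metis lspan_subset_lspan_iff subset_antisym)
  moreover have "card (C \<union> A \<union> B) = card C + card A + card B"
    using T(1-6) by (simp add: card_Un_disjoint Int_Un_distrib2)
  ultimately have "has_dim (lspan (X \<union> W)) (card C + card A + card B)"
    using has_dim_lspan[of "C \<union> A \<union> B"] T(1-3,7) by simp
  moreover have "has_dim (X \<inter> W) (card C)"
    using has_dim_lspan[OF T(1) lindep_free_subset[OF T(7)]] T(8) by auto
  ultimately show ?thesis using that T(11,12) by (metis add.commute add.left_commute)
qed

section \<open>Intersections and spans of k-subspaces\<close>

lemma has_dim_Int:
  assumes "has_dim X a" "has_dim Y b"
  shows "\<exists>e\<le>a. has_dim (X \<inter> Y) e"
proof -
  have "lsubspace (X \<inter> Y)" using assms has_dim_lsubspace lsubspace_Int by blast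
  then show ?thesis using has_dim_lsubspace_le[OF assms(1)] by blast
qed

lemma has_dim_Int_less:
  assumes "has_dim X k" "has_dim Y k" "X \<noteq> Y"
  shows "\<exists>e<k. has_dim (X \<inter> Y) e"
proof -
  obtain e where e: "e \<le> k" "has_dim (X \<inter> Y) e" using has_dim_Int[OF assms(1,2)] by blast
  have "e \<noteq> k"
  proof
    assume "e = k"
    then have "X \<subseteq> Y" using has_dim_subset[OF assms(1) e(2)] by blast
    then show False using has_dim_subset[OF assms(2,1)] assms(3) by blast
  qed
  then show ?thesis using e le_neq_implies_less by blast
qed

lemma grass_adj_if_common_subspace:
  assumes "has_dim A k" "has_dim B k" "A \<noteq> B" "has_dim S (k - 1)" "S \<subseteq> A" "S \<subseteq> B"
  shows "grass_adj k A B"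
proof -
  obtain e where e: "e < k" "has_dim (A \<inter> B) e" using has_dim_Int_less[OF assms(1-3)] by blast
  have "k - 1 \<le> e" using has_dim_subset[OF e(2) assms(4)] assms(5,6) by blast
  then have "e = k - 1" using e(1) by linarith
  then show ?thesis using e(2) unfolding grass_adj_def by simp
qed

lemma grass_adj_lspan_insert:
  assumes "finite E" "a \<notin> E" "b \<notin> E" "a \<noteq> b" "lindep_free (insert a (insert b E))"
  shows "grass_adj (Suc (card E)) (lspan (insert a E)) (lspan (insert b E))"
proof (rule grass_adj_if_common_subspace)
  have free: "lindep_free X" if "X \<subseteq> insert a (insert b E)" for X
    by (rule lindep_free_subset[OF assms(5) that])
  show "has_dim (lspan (insert a E)) (Suc (card E))" "has_dim (lspan (insert b E)) (Suc (card E))"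
    using has_dim_lspan[of "insert a E"] has_dim_lspan[of "insert b E"] free assms(1-3) by auto
  show "has_dim (lspan E) (Suc (card E) - 1)" using has_dim_lspan[of E] free assms(1) by auto
  have "insert a (insert b E) - {a} = insert b E" using assms(2,4) by auto
  then have "a \<notin> lspan (insert b E)" using lindep_free_not_in_lspan[OF assms(5), of a] by simp
  then show "lspan (insert a E) \<noteq> lspan (insert b E)" using lspan_superset[of "insert a E"] by blast
  show "lspan E \<subseteq> lspan (insert a E)" "lspan E \<subseteq> lspan (insert b E)" by (simp_all add: lspan_mono subset_insertI)
qed

lemma grass_adj_if_common_superspace:
  assumes "has_dim A k" "has_dim B k" "A \<noteq> B" "has_dim T (Suc k)" "A \<subseteq> T" "B \<subseteq> T"
  shows "grass_adj k A B"
proof -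
  obtain s i where si: "has_dim (lspan (A \<union> B)) s" "has_dim (A \<inter> B) i" "s + i = k + k"
    by (rule has_dim_lspan_Un_Int[OF assms(1,2)])
  have "lspan (A \<union> B) \<subseteq> T" using assms(5,6) lspan_minimal[OF has_dim_lsubspace[OF assms(4)]] by blast
  then have "s \<le> Suc k" using has_dim_subset[OF assms(4) si(1)] by blast
  moreover have "i < k" using has_dim_Int_less[OF assms(1-3)] si(2) has_dim_unique by blast
  ultimately have "i = k - 1" using si(3) by linarith
  then show ?thesis using si(2) unfolding grass_adj_def by simp
qed

lemma has_dim_lspan_Un_if_grass_adj:
  assumes "has_dim X k" "has_dim Y k" "grass_adj k X Y" "1 \<le> k"
  shows "has_dim (lspan (X \<union> Y)) (Suc k)"
proof -
  obtain s i where si: "has_dim (lspan (X \<union> Y)) s" "has_dim (X \<inter> Y) i" "s + i = k + k"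
    by (rule has_dim_lspan_Un_Int[OF assms(1,2)])
  have "i = k - 1" using si(2) assms(3) has_dim_unique unfolding grass_adj_def by blast
  then have "s = Suc k" using si(3) assms(4) by linarith
  then show ?thesis using si(1) by simp
qed

lemma grass_adj_triple_cases:
  assumes X: "has_dim X k" and Y: "has_dim Y k" and Z: "has_dim Z k"
    and XY: "grass_adj k X Y" and ZX: "grass_adj k Z X" and ZY: "grass_adj k Z Y"
  shows "X \<inter> Y \<subseteq> Z \<or> Z \<subseteq> lspan (X \<union> Y)"
proof (cases "Z \<inter> X = Z \<inter> Y")
  case True
  then have "Z \<inter> X \<subseteq> X \<inter> Y" by blast
  then have "Z \<inter> X = X \<inter> Y"
    using has_dim_subset XY ZX unfolding grass_adj_def by blast
  then show ?thesis by blast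
next
  case False
  define U where "U = lspan ((Z \<inter> X) \<union> (Z \<inter> Y))"
  have "U \<subseteq> Z" unfolding U_def by (rule lspan_minimal[OF has_dim_lsubspace[OF Z]]) blast
  then obtain u where u: "u \<le> k" "has_dim U u" "u = k \<longrightarrow> U = Z"
    using has_dim_lsubspace_le[OF Z] lsubspace_lspan unfolding U_def by blast
  have sub: "Z \<inter> X \<subseteq> U" "Z \<inter> Y \<subseteq> U"
    unfolding U_def using lspan_superset[of "(Z \<inter> X) \<union> (Z \<inter> Y)"] by blast+
  have "Z \<inter> X \<noteq> U"
  proof
    assume "Z \<inter> X = U"
    then have "Z \<inter> Y \<subseteq> Z \<inter> X" using sub by blast
    then have "Z \<inter> Y = Z \<inter> X" using has_dim_subset ZX ZY unfolding grass_adj_def by blast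
    then show False using False by simp
  qed
  then have "k - 1 < u" using has_dim_psubset[OF u(2)] ZX sub(1) unfolding grass_adj_def by blast
  then have "U = Z" using u by simp
  moreover have "U \<subseteq> lspan (X \<union> Y)" unfolding U_def by (rule lspan_mono) blast
  ultimately show ?thesis by blast
qed

definition grass_star :: "nat \<Rightarrow> nat \<Rightarrow> (nat \<Rightarrow> 'a::division_ring) set \<Rightarrow> (nat \<Rightarrow> 'a) set set" where
  "grass_star n k S = {X \<in> grass n k. S \<subseteq> X}"

definition grass_top :: "nat \<Rightarrow> nat \<Rightarrow> (nat \<Rightarrow> 'a::division_ring) set \<Rightarrow> (nat \<Rightarrow> 'a) set set" where
  "grass_top n k T = {X \<in> grass n k. X \<subseteq> T}"

lemma clique_grass_star: "has_dim S (k - 1) \<Longrightarrow> clique (grass n k) (grass_adj k) (grass_star n k S)"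
  unfolding clique_def grass_star_def grass_def using grass_adj_if_common_subspace by blast

lemma clique_grass_top: "has_dim T (Suc k) \<Longrightarrow> clique (grass n k) (grass_adj k) (grass_top n k T)"
  unfolding clique_def grass_top_def grass_def using grass_adj_if_common_superspace by blast

lemma clique_subset_grass_star:
  assumes D: "clique (grass n k) (grass_adj k) D"
    and PQR: "P \<in> D" "Q \<in> D" "R \<in> D" "P \<noteq> Q"
    and star: "P \<inter> Q \<subseteq> R" "\<not> R \<subseteq> lspan (P \<union> Q)"
  shows "D \<subseteq> grass_star n k (P \<inter> Q)"
proof
  fix X assume "X \<in> D"
  have dims: "has_dim P k" "has_dim Q k" "has_dim R k" "has_dim X k"
    using D PQR \<open>X \<in> D\<close> unfolding clique_def grass_def by auto
  have "P \<inter> Q \<subseteq> X"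
  proof (cases "X \<in> {P, Q, R}")
    case True
    then show ?thesis using star by blast
  next
    case False
    then have adj: "grass_adj k P Q" "grass_adj k X P" "grass_adj k X Q" "grass_adj k X R"
      using D PQR \<open>X \<in> D\<close> unfolding clique_def by auto
    show ?thesis
    proof (rule ccontr)
      assume "\<not> P \<inter> Q \<subseteq> X"
      then have XT: "X \<subseteq> lspan (P \<union> Q)" using grass_adj_triple_cases[OF dims(1,2,4) adj(1-3)] by blast
      define RT where "RT = R \<inter> lspan (P \<union> Q)"
      have "lsubspace RT"
        unfolding RT_def by (rule lsubspace_Int[OF has_dim_lsubspace[OF dims(3)] lsubspace_lspan])
      then obtain r where r: "has_dim RT r" "r \<le> k"
        using has_dim_lsubspace_le[OF dims(3)] unfolding RT_def by blast
      have "RT \<subset> R" using star(2) unfolding RT_def by blast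
      then have "r < k" using has_dim_psubset[OF dims(3) r(1)] by blast
      moreover have "P \<inter> Q \<subseteq> RT" unfolding RT_def using star(1) lspan_superset[of "P \<union> Q"] by blast
      then have "k - 1 \<le> r" using has_dim_subset[OF r(1)] adj(1) unfolding grass_adj_def by blast
      ultimately have "r = k - 1" by linarith
      then have "has_dim RT (k - 1)" using r(1) by simp
      moreover have "X \<inter> R \<subseteq> RT" unfolding RT_def using XT by blast
      ultimately have "X \<inter> R = RT" using has_dim_subset adj(4) unfolding grass_adj_def by blast
      then show False using \<open>P \<inter> Q \<subseteq> RT\<close> \<open>\<not> P \<inter> Q \<subseteq> X\<close> by blast
    qed
  qed
  then show "X \<in> grass_star n k (P \<inter> Q)"
    using D \<open>X \<in> D\<close> unfolding clique_def grass_star_def by blast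
qed

lemma clique_subset_grass_top:
  assumes k: "1 \<le> k" and D: "clique (grass n k) (grass_adj k) D"
    and PQR: "P \<in> D" "Q \<in> D" "R \<in> D" "P \<noteq> Q"
    and top: "R \<subseteq> lspan (P \<union> Q)" "\<not> P \<inter> Q \<subseteq> R"
  shows "D \<subseteq> grass_top n k (lspan (P \<union> Q))"
proof
  fix X assume "X \<in> D"
  have dims: "has_dim P k" "has_dim Q k" "has_dim R k" "has_dim X k"
    using D PQR \<open>X \<in> D\<close> unfolding clique_def grass_def by auto
  have "X \<subseteq> lspan (P \<union> Q)"
  proof (cases "X \<in> {P, Q, R}")
    case True
    then show ?thesis using top lspan_superset[of "P \<union> Q"] by blast
  next
    case False
    then have adj: "grass_adj k P Q" "grass_adj k X P" "grass_adj k X Q" "grass_adj k X R"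
      using D PQR \<open>X \<in> D\<close> unfolding clique_def by auto
    have T: "has_dim (lspan (P \<union> Q)) (Suc k)"
      by (rule has_dim_lspan_Un_if_grass_adj[OF dims(1,2) adj(1) k])
    show ?thesis
    proof (rule ccontr)
      assume "\<not> X \<subseteq> lspan (P \<union> Q)"
      then have "P \<inter> Q \<subseteq> X" using grass_adj_triple_cases[OF dims(1,2,4) adj(1-3)] by blast
      define V where "V = lspan (R \<union> (P \<inter> Q))"
      have "V \<subseteq> lspan (P \<union> Q)" unfolding V_def
        by (rule lspan_minimal[OF lsubspace_lspan]) (use top(1) lspan_superset[of "P \<union> Q"] in blast)
      then obtain v where v: "has_dim V v" "v = Suc k \<longrightarrow> V = lspan (P \<union> Q)"
        using has_dim_lsubspace_le[OF T] lsubspace_lspan unfolding V_def by blast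
      have "R \<subset> V" using top(2) lspan_superset[of "R \<union> (P \<inter> Q)"] unfolding V_def by blast
      then have "k < v" using has_dim_psubset[OF v(1) dims(3)] by blast
      moreover have "v \<le> Suc k" using has_dim_subset[OF T v(1)] \<open>V \<subseteq> lspan (P \<union> Q)\<close> by blast
      ultimately have VT: "V = lspan (P \<union> Q)" using v(2) by simp
      have XR: "has_dim (lspan (X \<union> R)) (Suc k)"
        by (rule has_dim_lspan_Un_if_grass_adj[OF dims(4,3) adj(4) k])
      have "V \<subseteq> lspan (X \<union> R)" unfolding V_def by (rule lspan_mono) (use \<open>P \<inter> Q \<subseteq> X\<close> in blast)
      then have "lspan (P \<union> Q) = lspan (X \<union> R)" using has_dim_subset[OF XR T] VT by blast
      then show False using \<open>\<not> X \<subseteq> lspan (P \<union> Q)\<close> lspan_superset[of "X \<union> R"] by blast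
    qed
  qed
  then show "X \<in> grass_top n k (lspan (P \<union> Q))"
    using D \<open>X \<in> D\<close> unfolding clique_def grass_top_def by blast
qed

section \<open>Walks, distance and cliques\<close>

definition walk :: "'v set \<Rightarrow> ('v \<Rightarrow> 'v \<Rightarrow> bool) \<Rightarrow> 'v \<Rightarrow> 'v \<Rightarrow> nat \<Rightarrow> bool" where
  "walk Vs adj x y d \<longleftrightarrow>
     (\<exists>p. p 0 = x \<and> p d = y \<and> (\<forall>i\<le>d. p i \<in> Vs) \<and> (\<forall>i<d. adj (p i) (p (Suc i))))"

lemma gdist_conv_walk: "gdist Vs adj x y = (LEAST d. walk Vs adj x y d)"
  unfolding gdist_def walk_def ..

lemma walk_0: "x \<in> Vs \<Longrightarrow> walk Vs adj x x 0"
  unfolding walk_def by auto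

lemma walk_Cons:
  assumes "x \<in> Vs" "adj x y" "walk Vs adj y z d"
  shows "walk Vs adj x z (Suc d)"
proof -
  obtain p where p: "p 0 = y" "p d = z" "\<forall>i\<le>d. p i \<in> Vs" "\<forall>i<d. adj (p i) (p (Suc i))"
    using assms(3) unfolding walk_def by blast
  let ?q = "\<lambda>i. if i = 0 then x else p (i - 1)"
  have "\<forall>i\<le>Suc d. ?q i \<in> Vs" using assms(1) p(3) by auto
  moreover have "\<forall>i<Suc d. adj (?q i) (?q (Suc i))"
    using assms(2) p(1,4) by (auto simp: less_Suc_eq_0_disj)
  ultimately show ?thesis unfolding walk_def using p(2) by (intro exI[of _ ?q]) auto
qed

lemma gdist_eq_1_iff:
  assumes "x \<in> Vs" "y \<in> Vs" "x \<noteq> y" "walk Vs adj x y d"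
  shows "gdist Vs adj x y = 1 \<longleftrightarrow> adj x y"
proof
  assume "gdist Vs adj x y = 1"
  then have "walk Vs adj x y 1" using LeastI[of "walk Vs adj x y", OF assms(4)] by (simp add: gdist_conv_walk)
  then show "adj x y" unfolding walk_def by auto
next
  assume "adj x y"
  then have "walk Vs adj x y 1" using walk_Cons[OF assms(1) _ walk_0[OF assms(2)]] by simp
  moreover have "1 \<le> e" if "walk Vs adj x y e" for e
    using that assms(3) unfolding walk_def by (cases e) auto
  ultimately show "gdist Vs adj x y = 1"
    unfolding gdist_conv_walk by (rule Least_equality)
qed

text \<open>Distance 1 means adjacency only in a connected graph without loops.\<close>

lemma isometric_embedding_adj_iff:
  assumes emb: "isometric_embedding V1 adj1 V2 adj2 f"
    and conn1: "\<And>x y. x \<in> V1 \<Longrightarrow> y \<in> V1 \<Longrightarrow> \<exists>d. walk V1 adj1 x y d"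
    and conn2: "\<And>x y. x \<in> V2 \<Longrightarrow> y \<in> V2 \<Longrightarrow> \<exists>d. walk V2 adj2 x y d"
    and irrefl1: "\<And>x. x \<in> V1 \<Longrightarrow> \<not> adj1 x x" and irrefl2: "\<And>x. x \<in> V2 \<Longrightarrow> \<not> adj2 x x"
    and xy: "x \<in> V1" "y \<in> V1"
  shows "adj2 (f x) (f y) \<longleftrightarrow> adj1 x y"
proof (cases "x = y")
  case True
  then show ?thesis using emb irrefl1 irrefl2 xy unfolding isometric_embedding_def by auto
next
  case False
  have f: "f x \<in> V2" "f y \<in> V2" "f x \<noteq> f y"
    using emb xy False unfolding isometric_embedding_def inj_on_def by auto
  have "gdist V2 adj2 (f x) (f y) = gdist V1 adj1 x y"
    using emb xy unfolding isometric_embedding_def by blast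
  moreover obtain d1 where "walk V1 adj1 x y d1" using conn1[OF xy] by blast
  moreover obtain d2 where "walk V2 adj2 (f x) (f y) d2" using conn2[OF f(1,2)] by blast
  ultimately show ?thesis using gdist_eq_1_iff[OF f] gdist_eq_1_iff[OF xy False] by metis
qed

lemma ex1_maximal_clique_if_greatest:
  assumes "clique Vs adj K" "C \<subseteq> K" "\<And>D. clique Vs adj D \<Longrightarrow> C \<subseteq> D \<Longrightarrow> D \<subseteq> K"
  shows "\<exists>!M. maximal_clique Vs adj M \<and> C \<subseteq> M"
proof (rule ex1I[of _ K])
  show "maximal_clique Vs adj K \<and> C \<subseteq> K"
    using assms unfolding maximal_clique_def by blast
next
  fix M assume "maximal_clique Vs adj M \<and> C \<subseteq> M"
  then show "M = K" using assms unfolding maximal_clique_def by blast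
qed

lemma maximal_clique_insert:
  assumes "maximal_clique Vs adj C" "w \<in> Vs" "\<And>x. x \<in> C \<Longrightarrow> x \<noteq> w \<Longrightarrow> adj x w \<and> adj w x"
  shows "w \<in> C"
proof -
  have "clique Vs adj (insert w C)" using assms unfolding maximal_clique_def clique_def by blast
  then show ?thesis using assms(1) unfolding maximal_clique_def by blast
qed

lemma maximal_clique_image:
  assumes inj: "inj_on f V" and adj: "\<And>x y. x \<in> V \<Longrightarrow> y \<in> V \<Longrightarrow> adj2 (f x) (f y) \<longleftrightarrow> adj1 x y"
    and C: "maximal_clique (f ` V) adj2 C"
  obtains D where "maximal_clique V adj1 D" "C = f ` D"
proof
  let ?D = "V \<inter> f -` C"
  show CD: "C = f ` ?D" using C unfolding maximal_clique_def clique_def by blast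
  have clique_image: "clique (f ` V) adj2 (f ` D')" if "clique V adj1 D'" for D'
    using that unfolding clique_def by (auto simp: adj subset_iff)
  show "maximal_clique V adj1 ?D"
    unfolding maximal_clique_def
  proof (intro conjI allI impI)
    show "clique V adj1 ?D"
      unfolding clique_def
    proof (intro conjI ballI impI)
      fix x y assume xy: "x \<in> ?D" "y \<in> ?D" "x \<noteq> y"
      then have "f x \<noteq> f y" using inj unfolding inj_on_def by blast
      then have "adj2 (f x) (f y)" using C xy unfolding maximal_clique_def clique_def by blast
      then show "adj1 x y" using adj xy by blast
    qed blast
    fix D' assume D': "clique V adj1 D' \<and> ?D \<subseteq> D'"
    then have "f ` D' = C" using C clique_image CD unfolding maximal_clique_def by (metis image_mono)
    then show "D' = ?D" using D' unfolding clique_def by blast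
  qed
qed

section \<open>The Grassmann graph\<close>

lemma grass_star_or_top_if_separated:
  assumes dims: "has_dim P k" "has_dim Q k" "has_dim R k" "has_dim Z k" and k: "1 \<le> k"
    and adj: "grass_adj k P Q" "grass_adj k R P" "grass_adj k R Q" "grass_adj k Z P" "grass_adj k Z Q"
    and sep: "Z \<noteq> R" "\<not> grass_adj k Z R"
  shows "(P \<inter> Q \<subseteq> R \<and> \<not> R \<subseteq> lspan (P \<union> Q)) \<or> (R \<subseteq> lspan (P \<union> Q) \<and> \<not> P \<inter> Q \<subseteq> R)"
proof -
  have S: "has_dim (P \<inter> Q) (k - 1)" using adj(1) unfolding grass_adj_def .
  have T: "has_dim (lspan (P \<union> Q)) (Suc k)" by (rule has_dim_lspan_Un_if_grass_adj[OF dims(1,2) adj(1) k])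
  have "\<not> (P \<inter> Q \<subseteq> R \<and> R \<subseteq> lspan (P \<union> Q))"
  proof
    assume R: "P \<inter> Q \<subseteq> R \<and> R \<subseteq> lspan (P \<union> Q)"
    from grass_adj_triple_cases[OF dims(1,2,4) adj(1,4,5)] have "grass_adj k Z R"
    proof
      assume "P \<inter> Q \<subseteq> Z"
      then show ?thesis using grass_adj_if_common_subspace[OF dims(4,3) sep(1) S] R by blast
    next
      assume "Z \<subseteq> lspan (P \<union> Q)"
      then show ?thesis using grass_adj_if_common_superspace[OF dims(4,3) sep(1) T] R by blast
    qed
    then show False using sep(2) by simp
  qed
  then show ?thesis using grass_adj_triple_cases[OF dims(1-3) adj(1-3)] by blast
qed

lemma grass_ex1_maximal_clique:
  assumes k: "1 \<le> k" and C: "clique (grass n k) (grass_adj k) C"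
    and PQR: "P \<in> C" "Q \<in> C" "R \<in> C" "P \<noteq> Q" "P \<noteq> R" "Q \<noteq> R"
    and Z: "Z \<in> grass n k" "grass_adj k Z P" "grass_adj k Z Q" "Z \<noteq> R" "\<not> grass_adj k Z R"
  shows "\<exists>!M. maximal_clique (grass n k) (grass_adj k) M \<and> C \<subseteq> M"
proof -
  have dims: "has_dim P k" "has_dim Q k" "has_dim R k" "has_dim Z k"
    using C PQR Z(1) unfolding clique_def grass_def by auto
  have adj: "grass_adj k P Q" "grass_adj k R P" "grass_adj k R Q"
    using C PQR unfolding clique_def by auto
  from grass_star_or_top_if_separated[OF dims k adj Z(2-5)] show ?thesis
  proof
    assume star: "P \<inter> Q \<subseteq> R \<and> \<not> R \<subseteq> lspan (P \<union> Q)"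
    have greatest: "D \<subseteq> grass_star n k (P \<inter> Q)"
      if "clique (grass n k) (grass_adj k) D" "C \<subseteq> D" for D
      using clique_subset_grass_star[OF that(1)] that(2) PQR star by blast
    have "clique (grass n k) (grass_adj k) (grass_star n k (P \<inter> Q))"
      by (rule clique_grass_star[OF adj(1)[unfolded grass_adj_def]])
    then show ?thesis by (rule ex1_maximal_clique_if_greatest[OF _ greatest[OF C order_refl] greatest])
  next
    assume top: "R \<subseteq> lspan (P \<union> Q) \<and> \<not> P \<inter> Q \<subseteq> R"
    have greatest: "D \<subseteq> grass_top n k (lspan (P \<union> Q))"
      if "clique (grass n k) (grass_adj k) D" "C \<subseteq> D" for D
      using clique_subset_grass_top[OF k that(1)] that(2) PQR top by blast
    have "clique (grass n k) (grass_adj k) (grass_top n k (lspan (P \<union> Q)))"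
      by (rule clique_grass_top[OF has_dim_lspan_Un_if_grass_adj[OF dims(1,2) adj(1) k]])
    then show ?thesis by (rule ex1_maximal_clique_if_greatest[OF _ greatest[OF C order_refl] greatest])
  qed
qed

lemma grass_adj_irrefl: "1 \<le> k \<Longrightarrow> X \<in> grass n k \<Longrightarrow> \<not> grass_adj k X X"
  using has_dim_unique[of X k "k - 1"] by (auto simp: grass_def grass_adj_def)

lemma lsubspace_coord_space: "lsubspace (coord_space n)"
  unfolding lsubspace_def coord_space_def by auto

text \<open>Exchange a basis vector of U outside W for one of W outside U.\<close>

lemma grass_exchange_step:
  assumes U: "U \<in> grass n k" and W: "W \<in> grass n k" and "U \<noteq> W" and e: "has_dim (U \<inter> W) e"
  obtains U' e' where "U' \<in> grass n k" "grass_adj k U U'" "has_dim (U' \<inter> W) e'" "e < e'"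
proof -
  have hU: "has_dim U k" "U \<subseteq> coord_space n" and hW: "has_dim W k" "W \<subseteq> coord_space n"
    using U W unfolding grass_def by auto
  obtain C A B where T: "finite C" "finite A" "finite B" "C \<inter> A = {}" "C \<inter> B = {}" "A \<inter> B = {}"
    "lindep_free (C \<union> A \<union> B)" "lspan C = U \<inter> W" "lspan (C \<union> A) = U" "lspan (C \<union> B) = W"
    "card C + card A = k" "card C + card B = k"
    by (rule has_dim_common_basis[OF hU(1) hW(1)])
  have free: "lindep_free X" if "X \<subseteq> C \<union> A \<union> B" for X by (rule lindep_free_subset[OF T(7) that])
  have "card C = e" using has_dim_unique[OF has_dim_lspan[OF T(1) free]] e T(8) by auto
  moreover obtain i where "i < k" "has_dim (U \<inter> W) i" using has_dim_Int_less[OF hU(1) hW(1) \<open>U \<noteq> W\<close>] by blast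
  ultimately have "e < k" using e has_dim_unique by blast
  then have "A \<noteq> {}" "B \<noteq> {}" using T(11,12) \<open>card C = e\<close> by auto
  then obtain a b where a: "a \<in> A" and b: "b \<in> B" by blast
  define E where "E = C \<union> (A - {a})"
  define U' where "U' = lspan (insert b E)"
  have E: "finite E" "a \<notin> E" "b \<notin> E" "a \<noteq> b" "insert a E = C \<union> A"
    using a b T(1,2,4,5,6) unfolding E_def by auto
  then have "card (C \<union> A) = Suc (card E)" unfolding E(5)[symmetric] by simp
  then have k: "k = Suc (card E)" using T(1,2,4,11) by (simp add: card_Un_disjoint)
  have "lindep_free (insert a (insert b E))" using a b unfolding E_def by (intro free) blast
  then have adj: "grass_adj k U U'"
    unfolding k U'_def T(9)[symmetric] E(5)[symmetric] by (rule grass_adj_lspan_insert[OF E(1-4)])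
  have "has_dim U' k" using has_dim_lspan[of "insert b E"] free[of "insert b E"] E(1,3) k b
    unfolding U'_def E_def by auto
  moreover have "U' \<subseteq> coord_space n"
    using T(9,10) hU(2) hW(2) lspan_superset[of "C \<union> A"] lspan_superset[of "C \<union> B"] b
    unfolding U'_def E_def by (intro lspan_minimal[OF lsubspace_coord_space]) blast
  ultimately have U': "U' \<in> grass n k" unfolding grass_def by blast
  obtain e' where e': "has_dim (U' \<inter> W) e'" using has_dim_Int[OF \<open>has_dim U' k\<close> hW(1)] by blast
  have "lindep_free (insert b C)" using b by (intro free) blast
  moreover have "b \<notin> C" using b T(5) by blast
  ultimately have "has_dim (lspan (insert b C)) (Suc e)"
    using has_dim_lspan[of "insert b C"] T(1) \<open>card C = e\<close> by simp
  moreover have "lspan (insert b C) \<subseteq> U'" unfolding U'_def E_def by (rule lspan_mono) blast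
  moreover have "lspan (insert b C) \<subseteq> W" unfolding T(10)[symmetric] by (rule lspan_mono) (use b in blast)
  ultimately have "Suc e \<le> e'" using has_dim_subset[OF e'] by blast
  then show ?thesis using that[OF U' adj e'] by simp
qed

lemma grass_walk:
  assumes W: "W \<in> grass n k" and U: "U \<in> grass n k" "has_dim (U \<inter> W) e"
  shows "\<exists>d. walk (grass n k) (grass_adj k) U W d"
  using U
proof (induction "k - e" arbitrary: U e rule: less_induct)
  case less
  show ?case
  proof (cases "U = W")
    case True
    then show ?thesis using walk_0[OF less.prems(1)] by blast
  next
    case False
    obtain U' e' where U': "U' \<in> grass n k" "grass_adj k U U'" "has_dim (U' \<inter> W) e'" "e < e'"
      by (rule grass_exchange_step[OF less.prems(1) W False less.prems(2)])
    obtain e'' where "e'' \<le> k" "has_dim (U' \<inter> W) e''"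
      using has_dim_Int[of U' k W k] U'(1) W unfolding grass_def by blast
    then have "e' \<le> k" using has_dim_unique[OF U'(3)] by simp
    then have "k - e' < k - e" using U'(4) by linarith
    then obtain d where "walk (grass n k) (grass_adj k) U' W d" using less.hyps[OF _ U'(1,3)] by blast
    then show ?thesis using walk_Cons[where adj = "grass_adj k", OF less.prems(1) U'(2)] by blast
  qed
qed

lemma grass_connected:
  assumes "U \<in> grass n k" "W \<in> grass n k"
  shows "\<exists>d. walk (grass n k) (grass_adj k) U W d"
proof -
  obtain e where "has_dim (U \<inter> W) e" using has_dim_Int[of U k W k] assms unfolding grass_def by blast
  then show ?thesis by (rule grass_walk[OF assms(2,1)])
qed

section \<open>The Johnson graph\<close>

lemma johnson_finite: "A \<in> johnson l m \<Longrightarrow> finite A"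
  unfolding johnson_def by (auto intro: finite_subset)

lemma johnson_adj_sym: "johnson_adj m X Y \<longleftrightarrow> johnson_adj m Y X"
  unfolding johnson_adj_def by (simp add: Int_commute)

lemma johnson_adj_irrefl: "1 \<le> m \<Longrightarrow> A \<in> johnson l m \<Longrightarrow> \<not> johnson_adj m A A"
  by (simp add: johnson_def johnson_adj_def)

lemma ex_less_notin:
  assumes "finite S" "card S < l"
  shows "\<exists>z<l. z \<notin> S"
proof (rule ccontr)
  assume "\<not> ?thesis"
  then have "{..<l} \<subseteq> S" by auto
  then have "card {..<l} \<le> card S" by (rule card_mono[OF assms(1)])
  then show False using assms(2) by simp
qed

lemma johnson_insert_mem:
  "A \<subseteq> {..<l} \<Longrightarrow> z < l \<Longrightarrow> z \<notin> A \<Longrightarrow> card A = m - 1 \<Longrightarrow> 1 \<le> m \<Longrightarrow> finite A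
    \<Longrightarrow> insert z A \<in> johnson l m"
  by (simp add: johnson_def)

lemma johnson_walk:
  assumes "A \<in> johnson l m" "B \<in> johnson l m"
  shows "\<exists>d. walk (johnson l m) (johnson_adj m) A B d"
  using assms(1)
proof (induction "card (A - B)" arbitrary: A rule: less_induct)
  case less
  have A: "finite A" "A \<subseteq> {..<l}" "card A = m" and B: "finite B" "B \<subseteq> {..<l}" "card B = m"
    using johnson_finite[OF less.prems] johnson_finite[OF assms(2)] less.prems assms(2)
    by (simp_all add: johnson_def)
  show ?case
  proof (cases "A = B")
    case True
    then show ?thesis using walk_0[OF less.prems] by blast
  next
    case False
    have "\<not> A \<subseteq> B" "\<not> B \<subseteq> A"
      using card_subset_eq[OF B(1)] card_subset_eq[OF A(1)] A(3) B(3) False by metis+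
    then obtain a b where ab: "a \<in> A" "a \<notin> B" "b \<in> B" "b \<notin> A" by blast
    define A' where "A' = insert b (A - {a})"
    have "0 < card A" using A(1) ab(1) card_gt_0_iff by blast
    moreover have "card (A - {a}) = m - 1" using A ab by simp
    ultimately have A': "A' \<in> johnson l m"
      unfolding A'_def using A B ab by (intro johnson_insert_mem) auto
    have "A \<inter> A' = A - {a}" unfolding A'_def using ab by auto
    then have adj: "johnson_adj m A A'" unfolding johnson_adj_def using A ab by simp
    have "A' - B = (A - B) - {a}" unfolding A'_def using ab by auto
    moreover have "card ((A - B) - {a}) < card (A - B)" using ab A(1) by (intro card_Diff1_less) auto
    ultimately have "card (A' - B) < card (A - B)" by simp
    then obtain d where "walk (johnson l m) (johnson_adj m) A' B d" using less.hyps A' by blast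
    then show ?thesis using walk_Cons[where adj = "johnson_adj m", OF less.prems adj] by blast
  qed
qed

lemma johnson_adjE:
  assumes "X1 \<in> johnson l m" "X2 \<in> johnson l m" "johnson_adj m X1 X2" "1 \<le> m"
  obtains A x1 x2 where "X1 = insert x1 A" "X2 = insert x2 A" "x1 \<notin> A" "x2 \<notin> A" "x1 \<noteq> x2"
    "card A = m - 1" "finite A"
proof -
  define A where "A = X1 \<inter> X2"
  have X: "finite X1" "card X1 = m" "finite X2" "card X2 = m"
    using assms(1,2) johnson_finite[OF assms(1)] johnson_finite[OF assms(2)]
    by (simp_all add: johnson_def)
  have cA: "card A = m - 1" "finite A" using assms(3) X unfolding johnson_adj_def A_def by auto
  have "card (X1 - A) = 1" "card (X2 - A) = 1"
    using card_Diff_subset_Int[of X1 X2] card_Diff_subset_Int[of X2 X1] X cA assms(4)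
    unfolding A_def by (simp_all add: Diff_Int Int_commute)
  then obtain x1 x2 where "X1 - A = {x1}" "X2 - A = {x2}" by (meson card_1_singletonE)
  then show ?thesis using that[of x1 A x2] cA unfolding A_def by blast
qed

lemma johnson_exists_adj:
  assumes "X \<in> johnson l m" "1 \<le> m" "m < l"
  obtains Y where "Y \<in> johnson l m" "johnson_adj m X Y"
proof -
  have X: "finite X" "X \<subseteq> {..<l}" "card X = m"
    using assms(1) johnson_finite[OF assms(1)] by (simp_all add: johnson_def)
  obtain a where a: "a \<in> X" using X assms(2) by fastforce
  obtain b where b: "b < l" "b \<notin> X" using ex_less_notin X assms(3) by blast
  have "card (X - {a}) = m - 1" using X a by simp
  then have "insert b (X - {a}) \<in> johnson l m" using X b assms(2) by (intro johnson_insert_mem) auto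
  moreover have "X \<inter> insert b (X - {a}) = X - {a}" using b by auto
  then have "johnson_adj m X (insert b (X - {a}))" unfolding johnson_adj_def using X a by simp
  ultimately show ?thesis using that by blast
qed

lemma johnson_common_adj:
  assumes "insert x1 A \<in> johnson l m" "insert x2 A \<in> johnson l m" "x1 \<notin> A" "x2 \<notin> A"
    "x1 \<noteq> x2" "card A = m - 1" "finite A" "1 \<le> m" "m + 1 < l"
  obtains z where "z \<notin> insert x1 (insert x2 A)" "insert z A \<in> johnson l m"
    "johnson_adj m (insert z A) (insert x1 A)" "johnson_adj m (insert z A) (insert x2 A)"
proof -
  have "card (insert x1 (insert x2 A)) = m + 1" using assms(3-8) by simp
  then obtain z where z: "z < l" "z \<notin> insert x1 (insert x2 A)"
    using ex_less_notin assms(7,9) by (metis finite_insert)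
  have "insert z A \<in> johnson l m"
    using assms(1,6-8) z unfolding johnson_def by auto
  moreover have "insert z A \<inter> insert x1 A = A" "insert z A \<inter> insert x2 A = A" using z by auto
  ultimately show ?thesis using that z assms(6) unfolding johnson_adj_def by simp
qed

lemma johnson_separating_vertex_star:
  assumes J: "insert x1 A \<in> johnson l m" "insert x2 A \<in> johnson l m"
    and A: "x1 \<notin> A" "x2 \<notin> A" "x1 \<noteq> x2" "card A = m - 1" "finite A" and m: "1 < m"
    and X3: "A \<subseteq> X3" "x1 \<notin> X3" "x2 \<notin> X3"
  obtains Y where "Y \<in> johnson l m" "johnson_adj m Y (insert x1 A)" "johnson_adj m Y (insert x2 A)"
    "Y \<noteq> X3" "\<not> johnson_adj m Y X3"
proof -
  obtain a where a: "a \<in> A" using A(4,5) m by (metis card.empty diff_is_0_eq ex_in_conv not_le)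
  define Y where "Y = insert x1 (insert x2 (A - {a}))"
  have cA: "card (A - {a}) = m - 2" using a A(4,5) by simp
  have "Y \<in> johnson l m" using J A(1-3) A(5) cA m unfolding Y_def johnson_def by auto
  moreover have "Y \<inter> insert x1 A = insert x1 (A - {a})" "Y \<inter> insert x2 A = insert x2 (A - {a})"
    "Y \<inter> X3 = A - {a}"
    unfolding Y_def using A(1-3) X3 by auto
  then have "johnson_adj m Y (insert x1 A)" "johnson_adj m Y (insert x2 A)" "\<not> johnson_adj m Y X3"
    unfolding johnson_adj_def using A(1,2,5) cA m by auto
  moreover have "Y \<noteq> X3" using a A(1,2) X3(1) unfolding Y_def by blast
  ultimately show ?thesis using that by blast
qed

lemma johnson_separating_vertex_top:
  assumes J: "insert x1 A \<in> johnson l m" "insert x2 A \<in> johnson l m"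
    and A: "x1 \<notin> A" "x2 \<notin> A" "x1 \<noteq> x2" "card A = m - 1" "finite A" and m: "1 < m" "m + 1 < l"
    and X3: "y \<in> A" "X3 = insert x1 (insert x2 (A - {y}))"
  obtains Y where "Y \<in> johnson l m" "johnson_adj m Y (insert x1 A)" "johnson_adj m Y (insert x2 A)"
    "Y \<noteq> X3" "\<not> johnson_adj m Y X3"
proof -
  obtain z where z: "z \<notin> insert x1 (insert x2 A)" "insert z A \<in> johnson l m"
    "johnson_adj m (insert z A) (insert x1 A)" "johnson_adj m (insert z A) (insert x2 A)"
    using johnson_common_adj[OF J A] m by auto
  have "insert z A \<inter> X3 = A - {y}" using z(1) X3 A(1,2) by auto
  then have "\<not> johnson_adj m (insert z A) X3"
    unfolding johnson_adj_def using X3(1) A(4,5) m by simp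
  moreover have "y \<in> insert z A" "y \<notin> X3" using X3 A(1,2) by auto
  then have "insert z A \<noteq> X3" by blast
  ultimately show ?thesis using that z by blast
qed

text \<open>Three pairwise adjacent vertices of J(l,m) either share m - 1 elements or lie in a set
  of m + 1 elements.\<close>

lemma johnson_separating_vertex:
  assumes J: "X1 \<in> johnson l m" "X2 \<in> johnson l m" "X3 \<in> johnson l m"
    and m: "1 < m" "m + 1 < l"
    and adj: "johnson_adj m X1 X2" "johnson_adj m X3 X1" "johnson_adj m X3 X2"
    and ne: "X3 \<noteq> X1" "X3 \<noteq> X2"
  obtains Y where "Y \<in> johnson l m" "johnson_adj m Y X1" "johnson_adj m Y X2"
    "Y \<noteq> X3" "\<not> johnson_adj m Y X3"
proof -
  obtain A x1 x2 where S: "X1 = insert x1 A" "X2 = insert x2 A" "x1 \<notin> A" "x2 \<notin> A" "x1 \<noteq> x2"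
      "card A = m - 1" "finite A"
    by (rule johnson_adjE[OF J(1,2) adj(1)]) (use m in auto)
  have X3: "finite X3" "card X3 = m" using J(3) johnson_finite[OF J(3)] by (simp_all add: johnson_def)
  have card_X12: "card X1 = m" "card X2 = m" using J(1,2) by (simp_all add: johnson_def)
  show ?thesis
  proof (cases "A \<subseteq> X3")
    case True
    have "\<not> X1 \<subseteq> X3" "\<not> X2 \<subseteq> X3" using card_subset_eq[OF X3(1)] X3(2) card_X12 ne by metis+
    then have "x1 \<notin> X3" "x2 \<notin> X3" using True S(1,2) by auto
    then show ?thesis
      using johnson_separating_vertex_star[OF J(1,2)[unfolded S(1,2)] S(3-7) m(1) True] that S(1,2)
      by blast
  next
    case False
    then obtain y where y: "y \<in> A" "y \<notin> X3" by blast
    have "X1 - {y} \<subseteq> X3" "X2 - {y} \<subseteq> X3"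
      using card_subset_eq[of "X1 - {y}" "X3 \<inter> X1"] card_subset_eq[of "X2 - {y}" "X3 \<inter> X2"] adj(2,3)
        card_X12 y S(1,2,7) unfolding johnson_adj_def by auto
    then have "insert x1 (insert x2 (A - {y})) \<subseteq> X3" using S(1-4) y(1) by auto
    moreover have "card (insert x1 (insert x2 (A - {y}))) = m" using S(3-7) y(1) m(1) by simp
    ultimately have "X3 = insert x1 (insert x2 (A - {y}))" using card_subset_eq[OF X3(1)] X3(2) by metis
    then show ?thesis
      using johnson_separating_vertex_top[OF J(1,2)[unfolded S(1,2)] S(3-7) m y(1)] that S(1,2)
      by blast
  qed
qed

lemma johnson_maximal_clique_triangle:
  assumes D: "maximal_clique (johnson l m) (johnson_adj m) D" and m: "1 < m" "m + 1 < l"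
  obtains X1 X2 X3 where "X1 \<in> D" "X2 \<in> D" "X3 \<in> D" "X1 \<noteq> X2" "X1 \<noteq> X3" "X2 \<noteq> X3"
proof -
  have DJ: "D \<subseteq> johnson l m" and Dadj: "\<And>X Y. X \<in> D \<Longrightarrow> Y \<in> D \<Longrightarrow> X \<noteq> Y \<Longrightarrow> johnson_adj m X Y"
    using D unfolding maximal_clique_def clique_def by auto
  have ins: "W \<in> D" if "W \<in> johnson l m" "\<And>X. X \<in> D \<Longrightarrow> X \<noteq> W \<Longrightarrow> johnson_adj m X W" for W
    using maximal_clique_insert[OF D] that johnson_adj_sym by metis
  have irrefl: "\<not> johnson_adj m X X" if "X \<in> johnson l m" for X
    using johnson_adj_irrefl[OF _ that] m by simp
  have "{..<m} \<in> johnson l m" using m by (simp add: johnson_def)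
  then obtain X1 where X1: "X1 \<in> D" using ins by blast
  obtain W1 where W1: "W1 \<in> johnson l m" "johnson_adj m X1 W1"
    using johnson_exists_adj[of X1 l m] X1 DJ m by auto
  obtain X2 where X2: "X2 \<in> D" "X2 \<noteq> X1"
    using ins[OF W1(1)] W1(2) irrefl[OF W1(1)] by (metis johnson_adj_sym)
  have X12: "X1 \<in> johnson l m" "X2 \<in> johnson l m" "johnson_adj m X1 X2" using Dadj X1 X2 DJ by auto
  obtain A x1 x2 where S: "X1 = insert x1 A" "X2 = insert x2 A" "x1 \<notin> A" "x2 \<notin> A" "x1 \<noteq> x2"
      "card A = m - 1" "finite A"
    by (rule johnson_adjE[OF X12]) (use m in auto)
  obtain z where z: "insert z A \<in> johnson l m"
      "johnson_adj m (insert z A) X1" "johnson_adj m (insert z A) X2"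
    using johnson_common_adj[of x1 A l m x2] S X12 m by auto
  have "\<exists>X3\<in>D. X3 \<noteq> X1 \<and> X3 \<noteq> X2"
  proof (rule ccontr)
    assume none: "\<not> ?thesis"
    then have "insert z A \<in> D" using ins[OF z(1)] z(2,3) johnson_adj_sym by metis
    then show False using none z(2,3) irrefl[OF z(1)] by metis
  qed
  then show ?thesis using that X1 X2 by blast
qed

lemma johnson_maximal_clique_separated:
  assumes D: "maximal_clique (johnson l m) (johnson_adj m) D" and m: "1 < m" "m + 1 < l"
  obtains X1 X2 X3 Y where "X1 \<in> D" "X2 \<in> D" "X3 \<in> D" "X1 \<noteq> X2" "X1 \<noteq> X3" "X2 \<noteq> X3"
    "Y \<in> johnson l m" "johnson_adj m Y X1" "johnson_adj m Y X2" "Y \<noteq> X3" "\<not> johnson_adj m Y X3"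
proof -
  obtain X1 X2 X3 where X: "X1 \<in> D" "X2 \<in> D" "X3 \<in> D" "X1 \<noteq> X2" "X1 \<noteq> X3" "X2 \<noteq> X3"
    by (rule johnson_maximal_clique_triangle[OF D m])
  have "X1 \<in> johnson l m" "X2 \<in> johnson l m" "X3 \<in> johnson l m"
    and "johnson_adj m X1 X2" "johnson_adj m X3 X1" "johnson_adj m X3 X2"
    using D X unfolding maximal_clique_def clique_def by auto
  then obtain Y where "Y \<in> johnson l m" "johnson_adj m Y X1" "johnson_adj m Y X2" "Y \<noteq> X3"
      "\<not> johnson_adj m Y X3"
    using johnson_separating_vertex[OF _ _ _ m] X(5,6) by metis
  then show ?thesis using that X by blast
qed

lemma isometric_embedding_johnson_grass_adj_iff:
  fixes f :: "nat set \<Rightarrow> (nat \<Rightarrow> 'a::division_ring) set"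
  assumes "isometric_embedding (johnson l m) (johnson_adj m) (grass n k) (grass_adj k) f"
    and "1 \<le> k" "1 \<le> m" "X \<in> johnson l m" "Y \<in> johnson l m"
  shows "grass_adj k (f X) (f Y) \<longleftrightarrow> johnson_adj m X Y"
proof (rule isometric_embedding_adj_iff[OF assms(1) johnson_walk grass_connected _ _ assms(4,5)])
  show "\<not> johnson_adj m X X" if "X \<in> johnson l m" for X
    by (rule johnson_adj_irrefl[OF assms(3) that])
  show "\<not> grass_adj k U U" if "U \<in> (grass n k :: (nat \<Rightarrow> 'a) set set)" for U
    by (rule grass_adj_irrefl[OF assms(2) that])
qed

theorem lemma1:
  fixes n k l m :: nat and f :: "nat set \<Rightarrow> (nat \<Rightarrow> 'a::division_ring) set"
    and C :: "(nat \<Rightarrow> 'a) set set"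
  assumes "4 \<le> n" and "4 \<le> l"
    and "1 < k" and "k < n - 1" and "1 < m" and "m < l - 1"
    and "min m (l - m) \<le> min k (n - k)"
    and "isometric_embedding (johnson l m) (johnson_adj m) (grass n k) (grass_adj k) f"
    and "maximal_clique (f ` johnson l m) (grass_adj k) C"
  shows "\<exists>!M. maximal_clique (grass n k) (grass_adj k) M \<and> C \<subseteq> M"
proof -
  have k: "1 \<le> k" and m: "1 < m" "m + 1 < l" using assms(3,5,6) by auto
  have emb: "inj_on f (johnson l m)" "f ` johnson l m \<subseteq> grass n k"
    using assms(8) unfolding isometric_embedding_def by auto
  have adj_iff: "grass_adj k (f X) (f Y) \<longleftrightarrow> johnson_adj m X Y"
    if "X \<in> johnson l m" "Y \<in> johnson l m" for X Y
    using isometric_embedding_johnson_grass_adj_iff[OF assms(8) k _ that] m by simp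
  obtain D where D: "maximal_clique (johnson l m) (johnson_adj m) D" and CD: "C = f ` D"
    by (rule maximal_clique_image[OF emb(1) adj_iff assms(9)])
  obtain X1 X2 X3 Y where X: "X1 \<in> D" "X2 \<in> D" "X3 \<in> D" "X1 \<noteq> X2" "X1 \<noteq> X3" "X2 \<noteq> X3"
    and Y: "Y \<in> johnson l m" "johnson_adj m Y X1" "johnson_adj m Y X2" "Y \<noteq> X3" "\<not> johnson_adj m Y X3"
    by (rule johnson_maximal_clique_separated[OF D m])
  have XJ: "X1 \<in> johnson l m" "X2 \<in> johnson l m" "X3 \<in> johnson l m"
    using D X unfolding maximal_clique_def clique_def by auto
  have clique: "clique (grass n k) (grass_adj k) C"
    using assms(9) emb(2) unfolding maximal_clique_def clique_def by blast
  have PQR: "f X1 \<in> C" "f X2 \<in> C" "f X3 \<in> C" using X CD by auto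
  have ne: "f X1 \<noteq> f X2" "f X1 \<noteq> f X3" "f X2 \<noteq> f X3" "f Y \<noteq> f X3"
    using X(4-6) Y(1,4) XJ emb(1) unfolding inj_on_def by metis+
  have Z: "f Y \<in> grass n k" "grass_adj k (f Y) (f X1)" "grass_adj k (f Y) (f X2)"
    "\<not> grass_adj k (f Y) (f X3)"
    using Y XJ emb(2) adj_iff by auto
  show ?thesis by (rule grass_ex1_maximal_clique[OF k clique PQR ne(1-3) Z(1-3) ne(4) Z(4)])
qed

end
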